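(* Let $\mathsf{X}=\mathbb{R}^d$, $\mathsf{Y}=\mathbb{R}^{d'}$, $T\in\mathbb{N}$, and consider a hidden Markov model with initial density $\mu$ on $\mathsf{X}$, transition density $f$ on $\mathsf{X}$, and observation density $g:\mathsf{X}\times\mathsf{Y}\to\mathbb{R}_+$ (bounded, continuous), i.e. $(X_t)$ is a Markov chain with $X_1\sim\mu$, $X_t\mid X_{t-1}=x\sim f(x,\cdot)$, and let $\mathbb{E}$ denote expectation under this law. Fix observations $y_{1:T}\in\mathsf{Y}^T$ and let $L:=\mathbb{E}\left[\prod_{t=1}^T g(X_t,y_t)\right]>0$. Define $\boldsymbol\psi^*=(\psi_1^*,\dots,\psi_T^* )$ by $\psi_T^*(x_T):=g(x_T,y_T)$ and $$\psi_t^*(x_t):=g(x_t,y_t)\,\mathbb{E}\Big[\prod_{p=t+1}^T g(X_p,y_p)\,\Big|\,X_t=x_t\Big],\qquad x_t\in\mathsf{X},\ t\in\{1,\dots,T-1\},$$ and assume each $\psi_t^*$ is positive. Then for every $N\in\mathbb{N}$, the estimate $Z^N_{\boldsymbol\psi^*}$ produced by the $\boldsymbol\psi^*$-auxiliary particle filter with $N$ particles satisfies $Z^N_{\boldsymbol\psi^*}=L$ with probability $1$.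
   Context: For a transition density $f$ and function $\psi$ write $f(x,\psi):=\int_{\mathsf{X}}f(x,x')\psi(x')\,dx'$. Given positive functions $\boldsymbol\psi=(\psi_1,\dots,\psi_T)$, define $\tilde\psi_t(x):=f(x,\psi_{t+1})$ for $t\in\{1,\dots,T-1\}$, $\tilde\psi_T\equiv 1$, $\tilde\psi_0:=\int\mu(x_1)\psi_1(x_1)\,dx_1$, and the twisted model $\mu_1^{\boldsymbol\psi}(x_1):=\mu(x_1)\psi_1(x_1)/\tilde\psi_0$; $f_t^{\boldsymbol\psi}(x_{t-1},x_t):=f(x_{t-1},x_t)\psi_t(x_t)/\tilde\psi_{t-1}(x_{t-1})$ ($t\ge2$); $g_1^{\boldsymbol\psi}(x_1):=g(x_1,y_1)\tilde\psi_1(x_1)\tilde\psi_0/\psi_1(x_1)$, $g_t^{\boldsymbol\psi}(x_t):=g(x_t,y_t)\tilde\psi_t(x_t)/\psi_t(x_t)$ ($t\ge2$). The $\boldsymbol\psi$-auxiliary particle filter with $N$ particles: sample $\xi_1^i\sim\mu_1^{\boldsymbol\psi}$ independently for $i=1,\dots,N$; for $t=2,\dots,T$ sample independently $\xi_t^i\sim \sum_{j=1}^N g_{t-1}^{\boldsymbol\psi}(\xi_{t-1}^j)f_t^{\boldsymbol\psi}(\xi_{t-1}^j,\cdot)\big/\sum_{j=1}^N g_{t-1}^{\boldsymbol\psi}(\xi_{t-1}^j)$, $i=1,\dots,N$. Its estimate is $Z^N_{\boldsymbol\psi}:=\prod_{t=1}^T\big[\frac1N\sum_{i=1}^N g_t^{\boldsymbol\psi}(\xi_t^i)\big]$.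 *)

theory Defs
  imports "HOL-Probability.Probability"
begin

text \<open>State space X = 'a (a Euclidean space, i.e. R^d with d = DIM('a)),
  observation space Y = 'b.  Densities are with respect to Lebesgue measure lborel.
  Time indices run over 1..T, particle indices over 1..N.\<close>

text \<open>Marginal likelihood L = E[prod_{t=1}^T g(X_t,y_t)] where (X_1,...,X_T) has joint
  density mu(x_1) prod_{t=2}^T f(x_{t-1},x_t) on X^T.\<close>
definition hmm_L :: "('a::euclidean_space \<Rightarrow> real) \<Rightarrow> ('a \<Rightarrow> 'a \<Rightarrow> real)
    \<Rightarrow> ('a \<Rightarrow> 'b \<Rightarrow> real) \<Rightarrow> (nat \<Rightarrow> 'b) \<Rightarrow> nat \<Rightarrow> real" where
  "hmm_L \<mu> f g y T =
     (\<integral>z. \<mu> (z 1) * (\<Prod>t\<in>{2..T}. f (z (t - 1)) (z t)) * (\<Prod>t\<in>{1..T}. g (z t) (y t))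
        \<partial>(PiM {1..T} (\<lambda>_. lborel)))"

text \<open>E[prod_{p=t+1}^T g(X_p,y_p) | X_t = x]: expectation under the law of
  (X_{t+1},...,X_T) given X_t = x, which has density prod_{p=t+1}^T f(x_{p-1},x_p)
  with x_t = x.\<close>
definition hmm_future :: "('a::euclidean_space \<Rightarrow> 'a \<Rightarrow> real)
    \<Rightarrow> ('a \<Rightarrow> 'b \<Rightarrow> real) \<Rightarrow> (nat \<Rightarrow> 'b) \<Rightarrow> nat \<Rightarrow> nat \<Rightarrow> 'a \<Rightarrow> real" where
  "hmm_future f g y T t x =
     (\<integral>z. (\<Prod>p\<in>{Suc t..T}. f (if p = Suc t then x else z (p - 1)) (z p) * g (z p) (y p))
        \<partial>(PiM {Suc t..T} (\<lambda>_. lborel)))"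

definition psi_star :: "('a::euclidean_space \<Rightarrow> 'a \<Rightarrow> real)
    \<Rightarrow> ('a \<Rightarrow> 'b \<Rightarrow> real) \<Rightarrow> (nat \<Rightarrow> 'b) \<Rightarrow> nat \<Rightarrow> nat \<Rightarrow> 'a \<Rightarrow> real" where
  "psi_star f g y T t x =
     (if t = T then g x (y T) else g x (y t) * hmm_future f g y T t x)"

definition kapply :: "('a::euclidean_space \<Rightarrow> 'a \<Rightarrow> real) \<Rightarrow> 'a \<Rightarrow> ('a \<Rightarrow> real) \<Rightarrow> real" where
  "kapply f x \<psi> = (\<integral>x'. f x x' * \<psi> x' \<partial>lborel)"

definition psi_tilde :: "('a::euclidean_space \<Rightarrow> 'a \<Rightarrow> real) \<Rightarrow> (nat \<Rightarrow> 'a \<Rightarrow> real)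
    \<Rightarrow> nat \<Rightarrow> nat \<Rightarrow> 'a \<Rightarrow> real" where
  "psi_tilde f \<psi> T t x = (if t = T then 1 else kapply f x (\<psi> (Suc t)))"

definition psi_tilde0 :: "('a::euclidean_space \<Rightarrow> real) \<Rightarrow> (nat \<Rightarrow> 'a \<Rightarrow> real) \<Rightarrow> real" where
  "psi_tilde0 \<mu> \<psi> = (\<integral>x. \<mu> x * \<psi> 1 x \<partial>lborel)"

definition tw_mu :: "('a::euclidean_space \<Rightarrow> real) \<Rightarrow> (nat \<Rightarrow> 'a \<Rightarrow> real) \<Rightarrow> 'a \<Rightarrow> real" where
  "tw_mu \<mu> \<psi> x = \<mu> x * \<psi> 1 x / psi_tilde0 \<mu> \<psi>"

definition tw_f :: "('a::euclidean_space \<Rightarrow> 'a \<Rightarrow> real) \<Rightarrow> (nat \<Rightarrow> 'a \<Rightarrow> real)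
    \<Rightarrow> nat \<Rightarrow> nat \<Rightarrow> 'a \<Rightarrow> 'a \<Rightarrow> real" where
  "tw_f f \<psi> T t x x' = f x x' * \<psi> t x' / psi_tilde f \<psi> T (t - 1) x"

definition tw_g :: "('a::euclidean_space \<Rightarrow> real) \<Rightarrow> ('a \<Rightarrow> 'a \<Rightarrow> real)
    \<Rightarrow> ('a \<Rightarrow> 'b \<Rightarrow> real) \<Rightarrow> (nat \<Rightarrow> 'b) \<Rightarrow> (nat \<Rightarrow> 'a \<Rightarrow> real) \<Rightarrow> nat \<Rightarrow> nat \<Rightarrow> 'a \<Rightarrow> real" where
  "tw_g \<mu> f g y \<psi> T t x =
     (if t = 1 then g x (y 1) * psi_tilde f \<psi> T 1 x * psi_tilde0 \<mu> \<psi> / \<psi> 1 x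
      else g x (y t) * psi_tilde f \<psi> T t x / \<psi> t x)"

text \<open>Joint density of all particles xi(t,i), t in 1..T, i in 1..N, of the
  psi-auxiliary particle filter (w.r.t. Lebesgue measure on X^(T*N)):
  xi(1,i) iid ~ mu_1^psi, and given generation t-1, xi(t,i) iid from the mixture.\<close>
definition apf_density :: "('a::euclidean_space \<Rightarrow> real) \<Rightarrow> ('a \<Rightarrow> 'a \<Rightarrow> real)
    \<Rightarrow> ('a \<Rightarrow> 'b \<Rightarrow> real) \<Rightarrow> (nat \<Rightarrow> 'b) \<Rightarrow> (nat \<Rightarrow> 'a \<Rightarrow> real) \<Rightarrow> nat \<Rightarrow> nat
    \<Rightarrow> (nat \<times> nat \<Rightarrow> 'a) \<Rightarrow> real" where
  "apf_density \<mu> f g y \<psi> T N \<xi> =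
     (\<Prod>i\<in>{1..N}. tw_mu \<mu> \<psi> (\<xi> (1, i))) *
     (\<Prod>t\<in>{2..T}. \<Prod>i\<in>{1..N}.
        (\<Sum>j\<in>{1..N}. tw_g \<mu> f g y \<psi> T (t - 1) (\<xi> (t - 1, j)) *
                       tw_f f \<psi> T t (\<xi> (t - 1, j)) (\<xi> (t, i)))
        / (\<Sum>j\<in>{1..N}. tw_g \<mu> f g y \<psi> T (t - 1) (\<xi> (t - 1, j))))"

definition apf_law :: "('a::euclidean_space \<Rightarrow> real) \<Rightarrow> ('a \<Rightarrow> 'a \<Rightarrow> real)
    \<Rightarrow> ('a \<Rightarrow> 'b \<Rightarrow> real) \<Rightarrow> (nat \<Rightarrow> 'b) \<Rightarrow> (nat \<Rightarrow> 'a \<Rightarrow> real) \<Rightarrow> nat \<Rightarrow> nat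
    \<Rightarrow> (nat \<times> nat \<Rightarrow> 'a) measure" where
  "apf_law \<mu> f g y \<psi> T N =
     density (PiM ({1..T} \<times> {1..N}) (\<lambda>_. lborel))
             (\<lambda>\<xi>. ennreal (apf_density \<mu> f g y \<psi> T N \<xi>))"

definition apf_Z :: "('a::euclidean_space \<Rightarrow> real) \<Rightarrow> ('a \<Rightarrow> 'a \<Rightarrow> real)
    \<Rightarrow> ('a \<Rightarrow> 'b \<Rightarrow> real) \<Rightarrow> (nat \<Rightarrow> 'b) \<Rightarrow> (nat \<Rightarrow> 'a \<Rightarrow> real) \<Rightarrow> nat \<Rightarrow> nat
    \<Rightarrow> (nat \<times> nat \<Rightarrow> 'a) \<Rightarrow> real" where
  "apf_Z \<mu> f g y \<psi> T N \<xi> =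
     (\<Prod>t\<in>{1..T}. (1 / real N) * (\<Sum>i\<in>{1..N}. tw_g \<mu> f g y \<psi> T t (\<xi> (t, i))))"

end

theory Submission
  imports Defs
begin

text \<open>With the optimal twisting functions the twisted potentials are constant.
  Writing \<open>F\<^sub>t(x)\<close> for the expected future likelihood given \<open>X\<^sub>t = x\<close>, so that
  \<open>\<psi>\<^sup>*\<^sub>t = g\<^sub>t F\<^sub>t\<close>, the Markov property gives the one-step recursion
  \<open>F\<^sub>t(x) = f(x, \<psi>\<^sup>*\<^sub>t\<^sub>+\<^sub>1)\<close>, i.e. \<open>\<tilde>\<psi>\<^sub>t = F\<^sub>t\<close>, and likewise \<open>\<tilde>\<psi>\<^sub>0 = L\<close>.
  Hence \<open>g\<^sub>t\<^sup>\<psi> = g\<^sub>t \<tilde>\<psi>\<^sub>t / \<psi>\<^sup>*\<^sub>t = 1\<close> for \<open>t \<ge> 2\<close> and \<open>g\<^sub>1\<^sup>\<psi> = L\<close>, whatever the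
  particles are, so every factor of \<open>Z\<^sup>N\<close> is deterministic and their product is \<open>L\<close>.\<close>

lemma integral_mult_enn2real:
  assumes "h \<in> borel_measurable M" "F \<in> borel_measurable M"
    and "\<And>x. h x \<ge> 0" "\<And>x. F x \<noteq> \<infinity>"
  shows "(\<integral>x. h x * enn2real (F x) \<partial>M) = enn2real (\<integral>\<^sup>+x. ennreal (h x) * F x \<partial>M)"
proof -
  have "(\<integral>x. h x * enn2real (F x) \<partial>M) = enn2real (\<integral>\<^sup>+x. ennreal (h x * enn2real (F x)) \<partial>M)"
    using assms by (intro integral_eq_nn_integral) auto
  also have "(\<integral>\<^sup>+x. ennreal (h x * enn2real (F x)) \<partial>M) = (\<integral>\<^sup>+x. ennreal (h x) * F x \<partial>M)"
  proof (intro nn_integral_cong)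
    fix x
    have "ennreal (enn2real (F x)) = F x"
      using assms(4) by (simp add: ennreal_enn2real_if)
    then show "ennreal (h x * enn2real (F x)) = ennreal (h x) * F x"
      using assms(3) by (simp add: ennreal_mult)
  qed
  finally show ?thesis .
qed

lemma product_sigma_finite_lborel: "product_sigma_finite (\<lambda>_. lborel :: 'a::euclidean_space measure)"
  by (simp add: product_sigma_finite_def lborel.sigma_finite_measure_axioms)

locale hmm_kernel =
  fixes f :: "'a::euclidean_space \<Rightarrow> 'a \<Rightarrow> real"
    and g :: "'a \<Rightarrow> 'b \<Rightarrow> real"
    and y :: "nat \<Rightarrow> 'b"
    and T :: nat
  assumes f_meas: "(\<lambda>(x, x'). f x x') \<in> borel_measurable (lborel \<Otimes>\<^sub>M lborel)"
    and g_meas: "\<And>v. (\<lambda>x. g x v) \<in> borel_measurable lborel"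
    and f_nonneg: "\<And>x x'. f x x' \<ge> 0"
    and g_nonneg: "\<And>x v. g x v \<ge> 0"
begin

lemma f_meas_compose [measurable (raw)]:
  assumes "a \<in> measurable M lborel" "b \<in> measurable M lborel"
  shows "(\<lambda>z. f (a z) (b z)) \<in> borel_measurable M"
  using measurable_comp[OF measurable_Pair[OF assms] f_meas] by (simp add: comp_def)

lemma g_meas_compose [measurable (raw)]:
  assumes "a \<in> measurable M lborel"
  shows "(\<lambda>z. g (a z) v) \<in> borel_measurable M"
  using measurable_comp[OF assms g_meas] by (simp add: comp_def)

definition future_weight :: "nat \<Rightarrow> 'a \<Rightarrow> (nat \<Rightarrow> 'a) \<Rightarrow> real" where
  "future_weight t x z = (\<Prod>p\<in>{Suc t..T}. f (if p = Suc t then x else z (p - 1)) (z p) * g (z p) (y p))"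

lemma future_weight_measurable:
  "(\<lambda>q. future_weight t (fst q) (snd q)) \<in> borel_measurable (lborel \<Otimes>\<^sub>M PiM {Suc t..T} (\<lambda>_. lborel))"
  unfolding future_weight_def
proof (intro borel_measurable_prod borel_measurable_times)
  fix p assume p: "p \<in> {Suc t..T}"
  have "(\<lambda>q. if p = Suc t then fst q else snd q (p - 1))
      \<in> measurable (lborel \<Otimes>\<^sub>M PiM {Suc t..T} (\<lambda>_. lborel)) lborel"
  proof (cases "p = Suc t")
    case False
    then have "p - 1 \<in> {Suc t..T}" using p by auto
    then show ?thesis using False by measurable
  qed simp
  then show "(\<lambda>q. f (if p = Suc t then fst q else snd q (p - 1)) (snd q p))
      \<in> borel_measurable (lborel \<Otimes>\<^sub>M PiM {Suc t..T} (\<lambda>_. lborel))"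
    using p by measurable
  show "(\<lambda>q. g (snd q p) (y p)) \<in> borel_measurable (lborel \<Otimes>\<^sub>M PiM {Suc t..T} (\<lambda>_. lborel))"
    using p by measurable
qed

lemma future_weight_measurable_snd:
  "future_weight t x \<in> borel_measurable (PiM {Suc t..T} (\<lambda>_. lborel))"
  using measurable_comp[OF measurable_Pair1'[of x lborel] future_weight_measurable]
  by (simp add: comp_def)

lemma future_weight_nonneg: "future_weight t x z \<ge> 0"
  unfolding future_weight_def by (intro prod_nonneg mult_nonneg_nonneg f_nonneg g_nonneg)

lemma future_weight_fun_upd:
  assumes "t < T"
  shows "future_weight t x (w(Suc t := x')) = f x x' * g x' (y (Suc t)) * future_weight (Suc t) x' w"
proof -
  have "{Suc t..T} = insert (Suc t) {Suc (Suc t)..T}" using assms by auto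
  then show ?thesis
    unfolding future_weight_def by (simp add: prod.insert) (auto intro!: prod.cong)
qed

text \<open>The future likelihood \<open>F\<^sub>t\<close> as an \<open>ennreal\<close> integral, which is always meaningful;
  \<open>hmm_future\<close> is its \<open>enn2real\<close>, the junk value \<open>0\<close> standing for \<open>\<infinity>\<close>.\<close>
definition future_nn :: "nat \<Rightarrow> 'a \<Rightarrow> ennreal" where
  "future_nn t x = (\<integral>\<^sup>+z. ennreal (future_weight t x z) \<partial>PiM {Suc t..T} (\<lambda>_. lborel))"

lemma future_nn_measurable: "future_nn t \<in> borel_measurable lborel"
proof -
  interpret product_sigma_finite "\<lambda>_. lborel :: 'a measure"
    by (rule product_sigma_finite_lborel)
  interpret finite_product_sigma_finite "\<lambda>_. lborel :: 'a measure" "{Suc t..T}"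
    by standard simp
  show ?thesis
    unfolding future_nn_def[abs_def]
    using future_weight_measurable by (intro borel_measurable_nn_integral) (simp add: case_prod_beta')
qed

lemma future_nn_beyond_horizon: "T \<le> t \<Longrightarrow> future_nn t x = 1"
  unfolding future_nn_def future_weight_def by (simp add: PiM_empty)

lemma future_nn_Suc:
  assumes "t < T"
  shows "future_nn t x = (\<integral>\<^sup>+x'. ennreal (f x x' * g x' (y (Suc t))) * future_nn (Suc t) x' \<partial>lborel)"
proof -
  interpret product_sigma_finite "\<lambda>_. lborel :: 'a measure"
    by (rule product_sigma_finite_lborel)
  have I: "{Suc t..T} = insert (Suc t) {Suc (Suc t)..T}" using assms by auto
  have "future_nn t x = (\<integral>\<^sup>+x'. \<integral>\<^sup>+w. ennreal (future_weight t x (w(Suc t := x')))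
      \<partial>PiM {Suc (Suc t)..T} (\<lambda>_. lborel) \<partial>lborel)"
    unfolding future_nn_def I
    using future_weight_measurable_snd[of t x] I by (intro product_nn_integral_insert_rev) auto
  also have "\<dots> = (\<integral>\<^sup>+x'. \<integral>\<^sup>+w. ennreal (f x x' * g x' (y (Suc t))) * ennreal (future_weight (Suc t) x' w)
      \<partial>PiM {Suc (Suc t)..T} (\<lambda>_. lborel) \<partial>lborel)"
    using assms by (intro nn_integral_cong) (simp add: future_weight_fun_upd ennreal_mult' f_nonneg g_nonneg)
  also have "\<dots> = (\<integral>\<^sup>+x'. ennreal (f x x' * g x' (y (Suc t))) * future_nn (Suc t) x' \<partial>lborel)"
    unfolding future_nn_def using future_weight_measurable_snd
    by (intro nn_integral_cong nn_integral_cmult) simp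
  finally show ?thesis .
qed

lemma hmm_future_eq_future_nn: "hmm_future f g y T t x = enn2real (future_nn t x)"
  unfolding hmm_future_def future_nn_def future_weight_def[symmetric]
  using future_weight_measurable_snd future_weight_nonneg by (intro integral_eq_nn_integral) auto

lemma psi_star_eq: "psi_star f g y T t x = g x (y t) * enn2real (future_nn t x)"
  by (simp add: psi_star_def hmm_future_eq_future_nn future_nn_beyond_horizon)

lemma kapply_psi_star:
  assumes "t < T" and finite: "\<And>x'. future_nn (Suc t) x' \<noteq> \<infinity>"
  shows "kapply f x (psi_star f g y T (Suc t)) = enn2real (future_nn t x)"
proof -
  have "kapply f x (psi_star f g y T (Suc t))
      = (\<integral>x'. (f x x' * g x' (y (Suc t))) * enn2real (future_nn (Suc t) x') \<partial>lborel)"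
    unfolding kapply_def psi_star_eq by (simp add: mult.assoc)
  also have "\<dots> = enn2real (\<integral>\<^sup>+x'. ennreal (f x x' * g x' (y (Suc t))) * future_nn (Suc t) x' \<partial>lborel)"
    using finite future_nn_measurable
    by (intro integral_mult_enn2real) (auto intro: mult_nonneg_nonneg f_nonneg g_nonneg)
  also have "\<dots> = enn2real (future_nn t x)"
    using assms by (simp add: future_nn_Suc)
  finally show ?thesis .
qed

lemma psi_tilde_psi_star:
  assumes "t \<in> {1..T}" and finite: "\<And>x'. future_nn (Suc t) x' \<noteq> \<infinity>"
  shows "psi_tilde f (psi_star f g y T) T t x = enn2real (future_nn t x)"
  using assms kapply_psi_star[of t] by (auto simp: psi_tilde_def future_nn_beyond_horizon)

lemma hmm_L_integrand_fun_upd: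
  assumes "T \<ge> 1"
  shows "\<mu> ((w(1 := x)) 1) * (\<Prod>t\<in>{2..T}. f ((w(1 := x)) (t - 1)) ((w(1 := x)) t))
      * (\<Prod>t\<in>{1..T}. g ((w(1 := x)) t) (y t)) = \<mu> x * g x (y 1) * future_weight 1 x w"
proof -
  have I: "{1..T} = insert 1 {2..T}" using assms by auto
  have "(\<Prod>t\<in>{2..T}. f ((w(1 := x)) (t - 1)) ((w(1 := x)) t))
      = (\<Prod>t\<in>{2..T}. f (if t = 2 then x else w (t - 1)) (w t))"
    by (rule prod.cong) auto
  moreover have "(\<Prod>t\<in>{1..T}. g ((w(1 := x)) t) (y t)) = g x (y 1) * (\<Prod>t\<in>{2..T}. g (w t) (y t))"
    unfolding I by (simp add: prod.insert)
  moreover have "future_weight 1 x w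
      = (\<Prod>t\<in>{2..T}. f (if t = 2 then x else w (t - 1)) (w t)) * (\<Prod>t\<in>{2..T}. g (w t) (y t))"
    unfolding future_weight_def by (simp add: prod.distrib numeral_2_eq_2)
  ultimately show ?thesis by (simp add: algebra_simps)
qed

lemma hmm_L_eq_future_nn:
  assumes mu_meas: "\<mu> \<in> borel_measurable lborel" and mu_nonneg: "\<And>x. \<mu> x \<ge> 0"
    and T: "T \<ge> 1"
  shows "hmm_L \<mu> f g y T = enn2real (\<integral>\<^sup>+x. ennreal (\<mu> x * g x (y 1)) * future_nn 1 x \<partial>lborel)"
proof -
  interpret product_sigma_finite "\<lambda>_. lborel :: 'a measure"
    by (rule product_sigma_finite_lborel)
  let ?H = "\<lambda>z. \<mu> (z 1) * (\<Prod>t\<in>{2..T}. f (z (t - 1)) (z t)) * (\<Prod>t\<in>{1..T}. g (z t) (y t))"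
  have I: "{1..T} = insert 1 {2..T}" using T by auto
  have coord: "(\<lambda>z. z j) \<in> measurable (PiM {1..T} (\<lambda>_. lborel)) lborel" if "j \<in> {1..T}" for j
    using that by measurable
  have H_meas: "?H \<in> borel_measurable (PiM {1..T} (\<lambda>_. lborel))"
  proof (intro borel_measurable_times borel_measurable_prod)
    show "(\<lambda>z. \<mu> (z 1)) \<in> borel_measurable (PiM {1..T} (\<lambda>_. lborel))"
      using measurable_comp[OF coord mu_meas] T by (simp add: comp_def)
  next
    fix t assume "t \<in> {2..T}"
    then have "t - 1 \<in> {1..T}" "t \<in> {1..T}" by auto
    then show "(\<lambda>z. f (z (t - 1)) (z t)) \<in> borel_measurable (PiM {1..T} (\<lambda>_. lborel))"
      using coord by measurable
  next
    fix t assume "t \<in> {1..T}"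
    then show "(\<lambda>z. g (z t) (y t)) \<in> borel_measurable (PiM {1..T} (\<lambda>_. lborel))"
      using coord by measurable
  qed
  have "hmm_L \<mu> f g y T = enn2real (\<integral>\<^sup>+z. ennreal (?H z) \<partial>PiM {1..T} (\<lambda>_. lborel))"
    unfolding hmm_L_def using H_meas
    by (intro integral_eq_nn_integral) (auto intro!: mult_nonneg_nonneg prod_nonneg mu_nonneg f_nonneg g_nonneg)
  also have "(\<integral>\<^sup>+z. ennreal (?H z) \<partial>PiM {1..T} (\<lambda>_. lborel))
      = (\<integral>\<^sup>+x. \<integral>\<^sup>+w. ennreal (?H (w(1 := x))) \<partial>PiM {2..T} (\<lambda>_. lborel) \<partial>lborel)"
    unfolding I using H_meas I by (intro product_nn_integral_insert_rev) auto
  also have "\<dots> = (\<integral>\<^sup>+x. \<integral>\<^sup>+w. ennreal (\<mu> x * g x (y 1)) * ennreal (future_weight 1 x w)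
      \<partial>PiM {Suc 1..T} (\<lambda>_. lborel) \<partial>lborel)"
    by (intro nn_integral_cong, subst hmm_L_integrand_fun_upd[OF T])
      (simp add: numeral_2_eq_2 ennreal_mult' mu_nonneg g_nonneg future_weight_nonneg)
  also have "\<dots> = (\<integral>\<^sup>+x. ennreal (\<mu> x * g x (y 1)) * future_nn 1 x \<partial>lborel)"
    unfolding future_nn_def using future_weight_measurable_snd
    by (intro nn_integral_cong nn_integral_cmult) simp
  finally show ?thesis .
qed

lemma psi_tilde0_psi_star:
  assumes mu_meas: "\<mu> \<in> borel_measurable lborel" and mu_nonneg: "\<And>x. \<mu> x \<ge> 0"
    and T: "T \<ge> 1" and finite: "\<And>x. future_nn 1 x \<noteq> \<infinity>"
  shows "psi_tilde0 \<mu> (psi_star f g y T) = hmm_L \<mu> f g y T"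
proof -
  have "psi_tilde0 \<mu> (psi_star f g y T) = (\<integral>x. (\<mu> x * g x (y 1)) * enn2real (future_nn 1 x) \<partial>lborel)"
    unfolding psi_tilde0_def psi_star_eq by (simp add: mult.assoc)
  also have "\<dots> = enn2real (\<integral>\<^sup>+x. ennreal (\<mu> x * g x (y 1)) * future_nn 1 x \<partial>lborel)"
    using finite future_nn_measurable mu_meas
    by (intro integral_mult_enn2real) (auto intro: mult_nonneg_nonneg mu_nonneg g_nonneg)
  also have "\<dots> = hmm_L \<mu> f g y T"
    using assms by (simp add: hmm_L_eq_future_nn)
  finally show ?thesis .
qed

lemma tw_g_psi_star:
  assumes mu_meas: "\<mu> \<in> borel_measurable lborel" and mu_nonneg: "\<And>x. \<mu> x \<ge> 0"
    and psi_pos: "\<And>t x. t \<in> {1..T} \<Longrightarrow> psi_star f g y T t x > 0"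
    and t: "t \<in> {1..T}"
  shows "tw_g \<mu> f g y (psi_star f g y T) T t x = (if t = 1 then hmm_L \<mu> f g y T else 1)"
proof -
  txt \<open>An infinite \<open>F\<^sub>s(x')\<close> would make \<open>\<psi>\<^sup>*\<^sub>s(x') = 0\<close>.\<close>
  have finite: "future_nn s x' \<noteq> \<infinity>" if "s \<ge> 1" for s x'
  proof (cases "s \<le> T")
    case True
    then show ?thesis using psi_pos[of s x'] that by (auto simp: psi_star_eq)
  qed (auto simp: future_nn_beyond_horizon)
  have tilde: "psi_tilde f (psi_star f g y T) T t x = enn2real (future_nn t x)"
    using t by (intro psi_tilde_psi_star finite) auto
  have psi: "psi_star f g y T t x = g x (y t) * psi_tilde f (psi_star f g y T) T t x"
    unfolding tilde psi_star_eq ..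
  have "psi_star f g y T t x \<noteq> 0"
    using psi_pos[OF t] by (simp add: less_le)
  then have ratio: "g x (y t) * psi_tilde f (psi_star f g y T) T t x / psi_star f g y T t x = 1"
    by (simp add: psi)
  have "tw_g \<mu> f g y (psi_star f g y T) T t x
      = (if t = 1 then psi_tilde0 \<mu> (psi_star f g y T) else 1)
        * (g x (y t) * psi_tilde f (psi_star f g y T) T t x / psi_star f g y T t x)"
    by (simp add: tw_g_def)
  with t finite show ?thesis
    unfolding ratio by (simp add: psi_tilde0_psi_star[OF mu_meas mu_nonneg])
qed

end

theorem proposition2:
  fixes \<mu> :: "'a::euclidean_space \<Rightarrow> real"
    and f :: "'a \<Rightarrow> 'a \<Rightarrow> real"
    and g :: "'a \<Rightarrow> 'b::euclidean_space \<Rightarrow> real"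
    and y :: "nat \<Rightarrow> 'b"
    and T N :: nat
  assumes T: "T \<ge> 1" and N: "N \<ge> 1"
    and mu_meas: "\<mu> \<in> borel_measurable lborel"
    and mu_nonneg: "\<And>x. \<mu> x \<ge> 0"
    and mu_dens: "(\<integral>\<^sup>+x. ennreal (\<mu> x) \<partial>lborel) = 1"
    and f_meas: "(\<lambda>(x, x'). f x x') \<in> borel_measurable (lborel \<Otimes>\<^sub>M lborel)"
    and f_nonneg: "\<And>x x'. f x x' \<ge> 0"
    and f_dens: "\<And>x. (\<integral>\<^sup>+x'. ennreal (f x x') \<partial>lborel) = 1"
    and g_nonneg: "\<And>x v. g x v \<ge> 0"
    and g_bounded: "\<exists>B. \<forall>x v. g x v \<le> B"
    and g_cont: "continuous_on UNIV (\<lambda>(x, v). g x v)"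
    and L_pos: "hmm_L \<mu> f g y T > 0"
    and psi_pos: "\<And>t x. t \<in> {1..T} \<Longrightarrow> psi_star f g y T t x > 0"
  shows "AE \<xi> in apf_law \<mu> f g y (psi_star f g y T) T N.
           apf_Z \<mu> f g y (psi_star f g y T) T N \<xi> = hmm_L \<mu> f g y T"
  \<comment> \<open>The identity holds for every particle configuration.\<close>
proof (rule AE_I2)
  have "continuous_on UNIV (\<lambda>x. (\<lambda>(x, v). g x v) (x, v))" for v
    by (rule continuous_on_compose2[OF g_cont]) (auto intro!: continuous_intros)
  then have "(\<lambda>x. g x v) \<in> borel_measurable lborel" for v
    by (simp add: borel_measurable_continuous_onI)
  then interpret hmm_kernel f g y T
    using f_meas f_nonneg g_nonneg by unfold_locales
  fix \<xi>
  have "1 / real N * (\<Sum>i\<in>{1..N}. tw_g \<mu> f g y (psi_star f g y T) T t (\<xi> (t, i)))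
      = (if t = 1 then hmm_L \<mu> f g y T else 1)" if "t \<in> {1..T}" for t
    using N tw_g_psi_star[OF mu_meas mu_nonneg psi_pos that] by (cases "t = 1") simp_all
  then have "apf_Z \<mu> f g y (psi_star f g y T) T N \<xi> = (\<Prod>t\<in>{1..T}. if t = 1 then hmm_L \<mu> f g y T else 1)"
    unfolding apf_Z_def by (rule prod.cong[OF refl])
  also have "\<dots> = hmm_L \<mu> f g y T"
    using T by (simp add: prod.If_cases Int_absorb1)
  finally show "apf_Z \<mu> f g y (psi_star f g y T) T N \<xi> = hmm_L \<mu> f g y T" .
qed

end
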